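(* For $n\ge0$ let $Q_n=\{-1,0,+1\}^n$, so that $Q_0$ consists of the empty tuple $()$. On the graded vector space $\bigoplus_{n\ge1}K[Q_{n-1}]$ define, for $a\in Q_{p-1}$ and $b\in Q_{q-1}$ (and extended bilinearly), the following elements of $Q_{p+q-1}$, where $(a,\varepsilon,b)$ denotes concatenation: $$a\dashv b=(a,-1,b),\qquad a\perp b=(a,0,b),\qquad a\vdash b=(a,+1,b).$$ Then $\bigl(\bigoplus_{n\ge1}K[Q_{n-1}];\dashv,\vdash,\perp\bigr)$ is a cubical trialgebra. Moreover, it is the free cubical trialgebra on the one generator $()\in Q_0$: for any cubical trialgebra $A$ and any $a\in A$ there is a unique morphism of cubical trialgebras sending $()$ to $a$.
   Context: A cubical trialgebra is a $K$-vector space $A$ with three bilinear operations $\dashv,\vdash,\perp$ satisfying the nine relations $(x\circ_1y)\circ_2z=x\circ_1(y\circ_2z)$ for all $x,y,z\in A$ and all $\circ_1,\circ_2\in\{\dashv,\vdash,\perp\}$. Morphisms are linear maps preserving the three operations. *)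

theory Defs
  imports Complex_Main "HOL-Library.Poly_Mapping"
begin

definition bilinear_op :: "('k::field \<Rightarrow> 'a::ab_group_add \<Rightarrow> 'a) \<Rightarrow> ('a \<Rightarrow> 'a \<Rightarrow> 'a) \<Rightarrow> bool" where
  "bilinear_op s m \<longleftrightarrow>
     (\<forall>x y z. m (x + y) z = m x z + m y z) \<and>
     (\<forall>x y z. m x (y + z) = m x y + m x z) \<and>
     (\<forall>c x y. m (s c x) y = s c (m x y)) \<and>
     (\<forall>c x y. m x (s c y) = s c (m x y))"

definition cubical_trialgebra ::
  "('k::field \<Rightarrow> 'a::ab_group_add \<Rightarrow> 'a) \<Rightarrow> ('a \<Rightarrow> 'a \<Rightarrow> 'a) \<Rightarrow> ('a \<Rightarrow> 'a \<Rightarrow> 'a) \<Rightarrow> ('a \<Rightarrow> 'a \<Rightarrow> 'a) \<Rightarrow> bool" where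
  "cubical_trialgebra s opl opr opp \<longleftrightarrow>
     Vector_Spaces.vector_space s \<and>
     (\<forall>m\<in>{opl, opr, opp}. bilinear_op s m) \<and>
     (\<forall>m1\<in>{opl, opr, opp}. \<forall>m2\<in>{opl, opr, opp}. \<forall>x y z. m2 (m1 x y) z = m1 x (m2 y z))"

definition trialgebra_morphism ::
  "('k::field \<Rightarrow> 'a::ab_group_add \<Rightarrow> 'a) \<Rightarrow> ('a \<Rightarrow> 'a \<Rightarrow> 'a) \<Rightarrow> ('a \<Rightarrow> 'a \<Rightarrow> 'a) \<Rightarrow> ('a \<Rightarrow> 'a \<Rightarrow> 'a) \<Rightarrow>
   ('k \<Rightarrow> 'b::ab_group_add \<Rightarrow> 'b) \<Rightarrow> ('b \<Rightarrow> 'b \<Rightarrow> 'b) \<Rightarrow> ('b \<Rightarrow> 'b \<Rightarrow> 'b) \<Rightarrow> ('b \<Rightarrow> 'b \<Rightarrow> 'b) \<Rightarrow>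
   ('a \<Rightarrow> 'b) \<Rightarrow> bool" where
  "trialgebra_morphism s1 l1 r1 p1 s2 l2 r2 p2 f \<longleftrightarrow>
     Vector_Spaces.linear s1 s2 f \<and>
     (\<forall>x y. f (l1 x y) = l2 (f x) (f y)) \<and>
     (\<forall>x y. f (r1 x y) = r2 (f x) (f y)) \<and>
     (\<forall>x y. f (p1 x y) = p2 (f x) (f y))"

text \<open>The cube coordinates {-1,0,+1}; Q_n = lists of length n.\<close>
datatype sgn3 = Neg | Nul | Pos

text \<open>The space (direct sum over n of K[Q_{n-1}]) = K-linear combinations of all
finite lists over sgn3, i.e. finitely supported functions.\<close>
type_synonym 'k cube_alg = "sgn3 list \<Rightarrow>\<^sub>0 'k"

definition cube_scale :: "'k::field \<Rightarrow> 'k cube_alg \<Rightarrow> 'k cube_alg" where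
  "cube_scale c f = Poly_Mapping.map (\<lambda>x. c * x) f"

definition cube_op :: "sgn3 \<Rightarrow> 'k::field cube_alg \<Rightarrow> 'k cube_alg \<Rightarrow> 'k cube_alg" where
  "cube_op e f g = (\<Sum>u\<in>Poly_Mapping.keys f. \<Sum>v\<in>Poly_Mapping.keys g. Poly_Mapping.single (u @ [e] @ v) (Poly_Mapping.lookup f u * Poly_Mapping.lookup g v))"

end

theory Submission
  imports Defs
begin

text \<open>By the nine relations any two of the operations associate with each other, so the
basis element \<open>(e\<^sub>1, \<dots>, e\<^sub>n)\<close> of the cube algebra is the iterated product
\<open>() e\<^sub>1 () e\<^sub>2 \<dots> e\<^sub>n ()\<close> of the generator, bracketed arbitrarily.
Hence a morphism is determined by the image \<open>a\<close> of \<open>()\<close>, and conversely sending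
\<open>(e\<^sub>1, \<dots>, e\<^sub>n)\<close> to \<open>a e\<^sub>1 (a e\<^sub>2 (\<dots> (a e\<^sub>n a)))\<close> and extending linearly is a
morphism: concatenation \<open>(u, e, v)\<close> of words goes to the product \<open>e\<close> of their values,
again by the mixed associativity in the target.\<close>

lemma poly_mapping_sum_single:
  "(\<Sum>u\<in>Poly_Mapping.keys f. Poly_Mapping.single u (Poly_Mapping.lookup f u)) = f"
  by (rule poly_mapping_eqI) (auto simp: lookup_sum lookup_single when_def in_keys_iff)

lemma poly_mapping_induct [case_names zero single add]:
  fixes f :: "'a \<Rightarrow>\<^sub>0 'b::comm_monoid_add"
  assumes "P 0" and "\<And>k v. P (Poly_Mapping.single k v)" and "\<And>f g. P f \<Longrightarrow> P g \<Longrightarrow> P (f + g)"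
  shows "P f"
proof -
  have "P (\<Sum>u\<in>S. Poly_Mapping.single u (Poly_Mapping.lookup f u))" if "finite S" for S
    using that by (induction S rule: finite_induct) (auto intro: assms)
  then show ?thesis
    using poly_mapping_sum_single finite_keys by metis
qed

lemma lookup_cube_scale [simp]:
  "Poly_Mapping.lookup (cube_scale c f) k = c * Poly_Mapping.lookup f k"
  by (simp add: cube_scale_def Poly_Mapping.map.rep_eq when_def)

lemma keys_cube_scale_subset: "Poly_Mapping.keys (cube_scale c f) \<subseteq> Poly_Mapping.keys f"
  by (auto simp: in_keys_iff)

lemma cube_scale_single [simp]:
  "cube_scale c (Poly_Mapping.single k v) = Poly_Mapping.single k (c * v)"
  by (simp add: cube_scale_def)

lemma vector_space_cube_scale:
  "vector_space (cube_scale :: 'k::field \<Rightarrow> 'k cube_alg \<Rightarrow> 'k cube_alg)"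
  by unfold_locales (auto intro!: poly_mapping_eqI simp: lookup_add algebra_simps)

interpretation cube_space: vector_space "cube_scale :: 'k::field \<Rightarrow> 'k cube_alg \<Rightarrow> 'k cube_alg"
  by (rule vector_space_cube_scale)

lemma cube_op_eq_sum_superset:
  assumes "finite S" "Poly_Mapping.keys f \<subseteq> S" "finite T" "Poly_Mapping.keys g \<subseteq> T"
  shows "cube_op e f g = (\<Sum>u\<in>S. \<Sum>v\<in>T.
           Poly_Mapping.single (u @ [e] @ v) (Poly_Mapping.lookup f u * Poly_Mapping.lookup g v))"
proof -
  have "cube_op e f g = (\<Sum>u\<in>Poly_Mapping.keys f. \<Sum>v\<in>T.
          Poly_Mapping.single (u @ [e] @ v) (Poly_Mapping.lookup f u * Poly_Mapping.lookup g v))"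
    unfolding cube_op_def
    by (intro sum.cong refl sum.mono_neutral_left assms) (auto simp: in_keys_iff)
  also have "\<dots> = (\<Sum>u\<in>S. \<Sum>v\<in>T.
          Poly_Mapping.single (u @ [e] @ v) (Poly_Mapping.lookup f u * Poly_Mapping.lookup g v))"
    by (intro sum.mono_neutral_left assms) (auto simp: in_keys_iff)
  finally show ?thesis .
qed

lemma cube_op_zero_left [simp]: "cube_op e 0 g = 0"
  and cube_op_zero_right [simp]: "cube_op e f 0 = 0"
  by (simp_all add: cube_op_def)

lemma cube_op_single [simp]:
  "cube_op e (Poly_Mapping.single u a) (Poly_Mapping.single v b) = Poly_Mapping.single (u @ [e] @ v) (a * b)"
  by (subst cube_op_eq_sum_superset[where S="{u}" and T="{v}"]) auto

lemma cube_op_add_left: "cube_op e (f + g) h = cube_op e f h + cube_op e g h"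
proof -
  let ?S = "Poly_Mapping.keys f \<union> Poly_Mapping.keys g" and ?T = "Poly_Mapping.keys h"
  let ?prod = "\<lambda>x u v. Poly_Mapping.single (u @ [e] @ v) (Poly_Mapping.lookup x u * Poly_Mapping.lookup h v)"
  have "cube_op e (f + g) h = (\<Sum>u\<in>?S. \<Sum>v\<in>?T. ?prod (f + g) u v)"
    by (rule cube_op_eq_sum_superset) (auto simp: keys_add)
  also have "\<dots> = (\<Sum>u\<in>?S. \<Sum>v\<in>?T. ?prod f u v) + (\<Sum>u\<in>?S. \<Sum>v\<in>?T. ?prod g u v)"
    by (simp add: lookup_add distrib_right single_add sum.distrib)
  also have "\<dots> = cube_op e f h + cube_op e g h"
    by (subst (1 2) cube_op_eq_sum_superset[where S="?S" and T="?T"]) auto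
  finally show ?thesis .
qed

lemma cube_op_add_right: "cube_op e h (f + g) = cube_op e h f + cube_op e h g"
proof -
  let ?S = "Poly_Mapping.keys h" and ?T = "Poly_Mapping.keys f \<union> Poly_Mapping.keys g"
  let ?prod = "\<lambda>x u v. Poly_Mapping.single (u @ [e] @ v) (Poly_Mapping.lookup h u * Poly_Mapping.lookup x v)"
  have "cube_op e h (f + g) = (\<Sum>u\<in>?S. \<Sum>v\<in>?T. ?prod (f + g) u v)"
    by (rule cube_op_eq_sum_superset) (auto simp: keys_add)
  also have "\<dots> = (\<Sum>u\<in>?S. \<Sum>v\<in>?T. ?prod f u v) + (\<Sum>u\<in>?S. \<Sum>v\<in>?T. ?prod g u v)"
    by (simp add: lookup_add distrib_left single_add sum.distrib)
  also have "\<dots> = cube_op e h f + cube_op e h g"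
    by (subst (1 2) cube_op_eq_sum_superset[where S="?S" and T="?T"]) auto
  finally show ?thesis .
qed

lemma cube_op_scale_left: "cube_op e (cube_scale c f) g = cube_scale c (cube_op e f g)"
  by (subst cube_op_eq_sum_superset[OF finite_keys keys_cube_scale_subset finite_keys subset_refl])
     (simp add: cube_op_def cube_space.scale_sum_right mult.assoc)

lemma cube_op_scale_right: "cube_op e f (cube_scale c g) = cube_scale c (cube_op e f g)"
  by (subst cube_op_eq_sum_superset[OF finite_keys subset_refl finite_keys keys_cube_scale_subset])
     (simp add: cube_op_def cube_space.scale_sum_right mult.left_commute)

lemma bilinear_cube_op: "bilinear_op cube_scale (cube_op e)"
  unfolding bilinear_op_def
  by (simp add: cube_op_add_left cube_op_add_right cube_op_scale_left cube_op_scale_right)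

lemma cube_op_assoc: "cube_op e2 (cube_op e1 f g) h = cube_op e1 f (cube_op e2 g h)"
proof (induction f rule: poly_mapping_induct)
  case (single u a)
  show ?case
  proof (induction g rule: poly_mapping_induct)
    case (single v b)
    show ?case
      by (induction h rule: poly_mapping_induct) (simp_all add: cube_op_add_right mult.assoc)
  qed (simp_all add: cube_op_add_left cube_op_add_right)
qed (simp_all add: cube_op_add_left)

fun sgn3_op :: "('a \<Rightarrow> 'a \<Rightarrow> 'a) \<Rightarrow> ('a \<Rightarrow> 'a \<Rightarrow> 'a) \<Rightarrow> ('a \<Rightarrow> 'a \<Rightarrow> 'a) \<Rightarrow> sgn3 \<Rightarrow> 'a \<Rightarrow> 'a \<Rightarrow> 'a" where
  "sgn3_op l r p Neg = l"
| "sgn3_op l r p Nul = p"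
| "sgn3_op l r p Pos = r"

lemma sgn3_op_eta: "sgn3_op (f Neg) (f Pos) (f Nul) = f"
proof
  show "sgn3_op (f Neg) (f Pos) (f Nul) e = f e" for e
    by (cases e) simp_all
qed

lemma all_sgn3: "(\<forall>e. P e) \<longleftrightarrow> P Neg \<and> P Nul \<and> P Pos"
  by (metis sgn3.exhaust)

locale indexed_trialgebra = vector_space s for s :: "'k::field \<Rightarrow> 'a::ab_group_add \<Rightarrow> 'a" +
  fixes op :: "sgn3 \<Rightarrow> 'a \<Rightarrow> 'a \<Rightarrow> 'a"
  assumes bilinear: "bilinear_op s (op e)"
    and assoc: "op e2 (op e1 x y) z = op e1 x (op e2 y z)"

lemma cubical_trialgebra_iff_indexed:
  "cubical_trialgebra s l r p \<longleftrightarrow> indexed_trialgebra s (sgn3_op l r p)"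
  unfolding cubical_trialgebra_def indexed_trialgebra_def indexed_trialgebra_axioms_def
  by (auto simp: all_sgn3)

lemma trialgebra_morphism_iff_indexed:
  "trialgebra_morphism s1 l1 r1 p1 s2 l2 r2 p2 f \<longleftrightarrow>
     Vector_Spaces.linear s1 s2 f \<and> (\<forall>e x y. f (sgn3_op l1 r1 p1 e x y) = sgn3_op l2 r2 p2 e (f x) (f y))"
  unfolding trialgebra_morphism_def by (simp add: all_sgn3 conj_ac)

lemma indexed_trialgebra_cube: "indexed_trialgebra cube_scale cube_op"
  by (intro indexed_trialgebra.intro vector_space_cube_scale indexed_trialgebra_axioms.intro
      bilinear_cube_op cube_op_assoc)

definition linear_ext :: "('k::field \<Rightarrow> 'a::ab_group_add \<Rightarrow> 'a) \<Rightarrow> ('b \<Rightarrow> 'a) \<Rightarrow> ('b \<Rightarrow>\<^sub>0 'k) \<Rightarrow> 'a" where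
  "linear_ext s \<phi> x = (\<Sum>w\<in>Poly_Mapping.keys x. s (Poly_Mapping.lookup x w) (\<phi> w))"

context vector_space
begin

lemma linear_ext_eq_sum_superset:
  assumes "finite S" "Poly_Mapping.keys x \<subseteq> S"
  shows "linear_ext scale \<phi> x = (\<Sum>w\<in>S. Poly_Mapping.lookup x w *s \<phi> w)"
  unfolding linear_ext_def
  by (intro sum.mono_neutral_left assms) (auto simp: in_keys_iff)

lemma linear_ext_single [simp]: "linear_ext scale \<phi> (Poly_Mapping.single w c) = c *s \<phi> w"
  by (subst linear_ext_eq_sum_superset[where S="{w}"]) auto

lemma linear_ext_zero [simp]: "linear_ext scale \<phi> 0 = 0"
  by (simp add: linear_ext_def)

lemma linear_ext_add: "linear_ext scale \<phi> (x + y) = linear_ext scale \<phi> x + linear_ext scale \<phi> y"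
proof -
  let ?S = "Poly_Mapping.keys x \<union> Poly_Mapping.keys y"
  have "linear_ext scale \<phi> (x + y) = (\<Sum>w\<in>?S. Poly_Mapping.lookup (x + y) w *s \<phi> w)"
    by (rule linear_ext_eq_sum_superset) (auto simp: keys_add)
  also have "\<dots> = (\<Sum>w\<in>?S. Poly_Mapping.lookup x w *s \<phi> w) + (\<Sum>w\<in>?S. Poly_Mapping.lookup y w *s \<phi> w)"
    by (simp add: lookup_add scale_left_distrib sum.distrib)
  also have "\<dots> = linear_ext scale \<phi> x + linear_ext scale \<phi> y"
    by (subst (1 2) linear_ext_eq_sum_superset[where S="?S"]) auto
  finally show ?thesis .
qed

lemma linear_ext_cube_scale: "linear_ext scale \<phi> (cube_scale c x) = c *s linear_ext scale \<phi> x"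
  by (subst linear_ext_eq_sum_superset[OF finite_keys keys_cube_scale_subset])
     (simp add: linear_ext_def scale_sum_right)

lemma linear_linear_ext: "Vector_Spaces.linear cube_scale scale (linear_ext scale \<phi>)"
  unfolding linear_iff_module_hom module_hom_iff module_iff_vector_space
  by (simp add: vector_space_cube_scale vector_space_axioms linear_ext_add linear_ext_cube_scale)

lemma linear_eq_linear_ext:
  assumes "Vector_Spaces.linear cube_scale scale g" and "\<And>w. g (Poly_Mapping.single w 1) = \<phi> w"
  shows "g = linear_ext scale \<phi>"
proof
  have add: "g (x + y) = g x + g y" and scale: "g (cube_scale c x) = c *s g x" for x y c
    using assms(1) unfolding linear_iff_module_hom module_hom_iff by auto
  have single: "g (Poly_Mapping.single w c) = c *s \<phi> w" for w c
  proof -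
    have "g (Poly_Mapping.single w c) = g (cube_scale c (Poly_Mapping.single w 1))"
      by simp
    also have "\<dots> = c *s \<phi> w"
      by (simp only: scale assms(2))
    finally show ?thesis .
  qed
  have zero: "g 0 = 0"
    using add[of 0 0] by simp
  show "g x = linear_ext scale \<phi> x" for x
    by (induction x rule: poly_mapping_induct) (simp_all add: zero single add linear_ext_add)
qed

end

primrec word_eval :: "(sgn3 \<Rightarrow> 'a \<Rightarrow> 'a \<Rightarrow> 'a) \<Rightarrow> 'a \<Rightarrow> sgn3 list \<Rightarrow> 'a" where
  "word_eval op a [] = a"
| "word_eval op a (e # w) = op e a (word_eval op a w)"

context indexed_trialgebra
begin

lemma word_eval_append: "word_eval op a (u @ e # v) = op e (word_eval op a u) (word_eval op a v)"
  by (induction u) (simp_all add: assoc)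

lemma op_add_left: "op e (x + y) z = op e x z + op e y z"
  and op_add_right: "op e x (y + z) = op e x y + op e x z"
  and op_scale_left: "op e (s c x) y = s c (op e x y)"
  and op_scale_right: "op e x (s c y) = s c (op e x y)"
  using bilinear[of e] unfolding bilinear_op_def by blast+

lemma op_zero_left [simp]: "op e 0 y = 0"
  and op_zero_right [simp]: "op e x 0 = 0"
  using op_add_left[of e 0 0 y] op_add_right[of e x 0 0] by simp_all

lemma linear_ext_word_eval_cube_op:
  "linear_ext s (word_eval op a) (cube_op e x y) =
     op e (linear_ext s (word_eval op a) x) (linear_ext s (word_eval op a) y)"
proof (induction x rule: poly_mapping_induct)
  case (single u c)
  show ?case
    by (induction y rule: poly_mapping_induct)
       (simp_all add: cube_op_add_right linear_ext_add op_add_right word_eval_append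
        op_scale_left op_scale_right mult.commute)
qed (simp_all add: cube_op_add_left linear_ext_add op_add_left)

lemma morphism_single_eq_word_eval:
  assumes "\<And>e x y. g (cube_op e x y) = op e (g x) (g y)" and "g (Poly_Mapping.single [] 1) = a"
  shows "g (Poly_Mapping.single w 1) = word_eval op a w"
proof (induction w)
  case (Cons e w)
  have "g (Poly_Mapping.single (e # w) 1) = g (cube_op e (Poly_Mapping.single [] 1) (Poly_Mapping.single w 1))"
    by simp
  also have "\<dots> = op e a (word_eval op a w)"
    by (simp only: assms Cons)
  finally show ?case
    by simp
qed (simp add: assms)

lemma ex1_morphism_from_cube:
  "\<exists>!g. (Vector_Spaces.linear cube_scale s g \<and> (\<forall>e x y. g (cube_op e x y) = op e (g x) (g y))) \<and>
        g (Poly_Mapping.single [] 1) = a"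
proof (rule ex1I)
  show "(Vector_Spaces.linear cube_scale s (linear_ext s (word_eval op a)) \<and>
          (\<forall>e x y. linear_ext s (word_eval op a) (cube_op e x y) =
             op e (linear_ext s (word_eval op a) x) (linear_ext s (word_eval op a) y))) \<and>
        linear_ext s (word_eval op a) (Poly_Mapping.single [] 1) = a"
    by (simp add: linear_linear_ext linear_ext_word_eval_cube_op)
next
  show "g = linear_ext s (word_eval op a)"
    if "(Vector_Spaces.linear cube_scale s g \<and> (\<forall>e x y. g (cube_op e x y) = op e (g x) (g y))) \<and>
        g (Poly_Mapping.single [] 1) = a" for g
    using that by (intro linear_eq_linear_ext morphism_single_eq_word_eval) auto
qed

end

theorem proposition5p2:
  fixes K_witness :: "'k::field itself" and A_witness :: "'a::ab_group_add itself"
  shows "cubical_trialgebra (cube_scale :: 'k \<Rightarrow> 'k cube_alg \<Rightarrow> 'k cube_alg)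
           (cube_op Neg) (cube_op Pos) (cube_op Nul) \<and>
         (\<forall>(s :: 'k \<Rightarrow> 'a \<Rightarrow> 'a) opl opr opp (a :: 'a).
            cubical_trialgebra s opl opr opp \<longrightarrow>
            (\<exists>!f. trialgebra_morphism (cube_scale :: 'k \<Rightarrow> 'k cube_alg \<Rightarrow> 'k cube_alg)
                    (cube_op Neg) (cube_op Pos) (cube_op Nul) s opl opr opp f \<and>
                  f (Poly_Mapping.single [] 1) = a))"
proof (intro conjI allI impI)
  show "cubical_trialgebra (cube_scale :: 'k \<Rightarrow> 'k cube_alg \<Rightarrow> 'k cube_alg)
          (cube_op Neg) (cube_op Pos) (cube_op Nul)"
    using indexed_trialgebra_cube by (simp add: cubical_trialgebra_iff_indexed sgn3_op_eta)
next
  fix s :: "'k \<Rightarrow> 'a \<Rightarrow> 'a" and opl opr opp and a :: 'a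
  assume "cubical_trialgebra s opl opr opp"
  then interpret indexed_trialgebra s "sgn3_op opl opr opp"
    by (simp add: cubical_trialgebra_iff_indexed)
  show "\<exists>!f. trialgebra_morphism cube_scale (cube_op Neg) (cube_op Pos) (cube_op Nul) s opl opr opp f \<and>
          f (Poly_Mapping.single [] 1) = a"
    using ex1_morphism_from_cube[of a]
    by (simp add: trialgebra_morphism_iff_indexed sgn3_op_eta[of cube_op])
qed

end
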